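(* Let $S$ be a nonempty set and $X=\ell^{\infty}(S)$ with the sup-norm metric and base point $0$. Then the function identically equal to $0$ is not a metric functional of $X$. In fact, every metric functional of $X$ is an unbounded function.
   Context: For a metric space $(X,d)$ with base point $x_0$, let $\mathrm{Hom}(X,\mathbb{R})$ be the set of $1$-Lipschitz functions $X\to\mathbb{R}$ with the topology of pointwise convergence and $h_y(\cdot)=d(\cdot,y)-d(x_0,y)$ for $y\in X$. Metric functionals are the elements of the closure of $\{h_y:y\in X\}$ in $\mathrm{Hom}(X,\mathbb{R})$. *)

theory Defs
  imports "HOL-Analysis.Analysis"
begin

definition lip1_funs :: "'x set \<Rightarrow> ('x \<Rightarrow> 'x \<Rightarrow> real) \<Rightarrow> ('x \<Rightarrow> real) set" where
  "lip1_funs M d = {f \<in> extensional M. \<forall>x\<in>M. \<forall>y\<in>M. \<bar>f x - f y\<bar> \<le> d x y}"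

definition hfun :: "'x set \<Rightarrow> ('x \<Rightarrow> 'x \<Rightarrow> real) \<Rightarrow> 'x \<Rightarrow> 'x \<Rightarrow> ('x \<Rightarrow> real)" where
  "hfun M d x0 y = restrict (\<lambda>x. d x y - d x0 y) M"

definition metric_functionals :: "'x set \<Rightarrow> ('x \<Rightarrow> 'x \<Rightarrow> real) \<Rightarrow> 'x \<Rightarrow> ('x \<Rightarrow> real) set" where
  "metric_functionals M d x0 =
     (subtopology (product_topology (\<lambda>_. euclideanreal) M) (lip1_funs M d)) closure_of (hfun M d x0 ` M)"

definition linf :: "'a set \<Rightarrow> ('a \<Rightarrow> real) set" where
  "linf S = {f \<in> extensional S. bounded (f ` S)}"

definition linf_dist :: "'a set \<Rightarrow> ('a \<Rightarrow> real) \<Rightarrow> ('a \<Rightarrow> real) \<Rightarrow> real" where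
  "linf_dist S f g = (SUP s\<in>S. \<bar>f s - g s\<bar>)"

definition linf_zero :: "'a set \<Rightarrow> ('a \<Rightarrow> real)" where
  "linf_zero S = restrict (\<lambda>_. 0) S"

end

theory Submission
  imports Defs
begin

text \<open>For every y in \<ell>^\<infinity>(S) and t \<ge> 0, one of the constant functions t and -t lies at
  sup-distance at least \<parallel>y\<parallel> + t from y, so max (h_y(t)) (h_y(-t)) \<ge> t. This is a closed
  condition in the topology of pointwise convergence, hence it passes to every metric functional,
  which therefore takes values \<ge> t for arbitrarily large t and is unbounded.\<close>

lemma metric_functionals_max_ge:
  assumes "a \<in> M" "b \<in> M"
    and h_ge: "\<forall>y\<in>M. t \<le> max (d a y - d x0 y) (d b y - d x0 y)"
    and \<phi>: "\<phi> \<in> metric_functionals M d x0"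
  shows "t \<le> max (\<phi> a) (\<phi> b)"
proof -
  let ?X = "subtopology (product_topology (\<lambda>_. euclideanreal) M) (lip1_funs M d)"
  let ?H = "hfun M d x0 ` M"
  let ?T = "{f \<in> topspace ?X. max (f a) (f b) \<in> {t..}}"
  have "continuous_map ?X euclideanreal (\<lambda>f. max (f a) (f b))"
    using assms(1,2)
    by (intro continuous_map_from_subtopology continuous_map_real_max
        continuous_map_product_projection[of _ _ "\<lambda>_. euclideanreal", simplified])
  then have "closedin ?X ?T"
    by (rule closedin_continuous_map_preimage) simp
  moreover have "topspace ?X \<inter> ?H \<subseteq> ?T"
    using assms(1,2) h_ge by (auto simp: hfun_def)
  ultimately have "?X closure_of (topspace ?X \<inter> ?H) \<subseteq> ?T"
    by (intro closure_of_minimal)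
  then show ?thesis
    using \<phi> by (auto simp: metric_functionals_def closure_of_restrict[of ?X ?H])
qed

lemma const_in_linf: "restrict (\<lambda>_. c :: real) S \<in> linf S"
  unfolding linf_def by (auto simp: bounded_iff intro!: exI[of _ "\<bar>c\<bar>"])

lemma linf_abs_le:
  assumes "f \<in> linf S"
  obtains B where "\<And>s. s \<in> S \<Longrightarrow> \<bar>f s\<bar> \<le> B"
  using assms by (auto simp: linf_def bounded_iff)

lemma linf_dist_ge:
  assumes "f \<in> linf S" "g \<in> linf S" "s \<in> S"
  shows "\<bar>f s - g s\<bar> \<le> linf_dist S f g"
proof -
  obtain B C where "\<And>s. s \<in> S \<Longrightarrow> \<bar>f s\<bar> \<le> B" "\<And>s. s \<in> S \<Longrightarrow> \<bar>g s\<bar> \<le> C"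
    using linf_abs_le assms(1,2) by metis
  then have "bdd_above ((\<lambda>s. \<bar>f s - g s\<bar>) ` S)"
    by (intro bdd_aboveI[of _ "B + C"]) (force intro: abs_triangle_ineq4[THEN order_trans])
  then show ?thesis
    unfolding linf_dist_def using assms(3) by (rule cSUP_upper2) simp
qed

lemma linf_dist_zero: "linf_dist S (linf_zero S) y = (SUP s\<in>S. \<bar>y s\<bar>)"
  unfolding linf_dist_def linf_zero_def by (rule SUP_cong) auto

lemma linf_dist_const_max_ge:
  assumes "S \<noteq> {}" "y \<in> linf S" "t \<ge> 0"
  shows "linf_dist S (linf_zero S) y + t
           \<le> max (linf_dist S (restrict (\<lambda>_. t) S) y) (linf_dist S (restrict (\<lambda>_. -t) S) y)"
    (is "_ \<le> max ?D1 ?D2")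
proof -
  have "\<bar>y s\<bar> \<le> max ?D1 ?D2 - t" if "s \<in> S" for s
  proof -
    have "\<bar>t - y s\<bar> \<le> ?D1" "\<bar>- t - y s\<bar> \<le> ?D2"
      using linf_dist_ge[OF const_in_linf assms(2) that] that by simp_all
    with \<open>t \<ge> 0\<close> show ?thesis by linarith
  qed
  then have "(SUP s\<in>S. \<bar>y s\<bar>) \<le> max ?D1 ?D2 - t"
    using assms(1) by (intro cSUP_least) auto
  then show ?thesis by (simp add: linf_dist_zero)
qed

lemma metric_functional_linf_const_max_ge:
  assumes "S \<noteq> {}" "t \<ge> 0"
    and "\<phi> \<in> metric_functionals (linf S) (linf_dist S) (linf_zero S)"
  shows "t \<le> max (\<phi> (restrict (\<lambda>_. t) S)) (\<phi> (restrict (\<lambda>_. -t) S))"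
proof (rule metric_functionals_max_ge[OF const_in_linf const_in_linf _ assms(3)])
  show "\<forall>y\<in>linf S. t \<le> max (linf_dist S (restrict (\<lambda>_. t) S) y - linf_dist S (linf_zero S) y)
                                (linf_dist S (restrict (\<lambda>_. -t) S) y - linf_dist S (linf_zero S) y)"
    using linf_dist_const_max_ge[OF assms(1) _ assms(2)] by force
qed

lemma metric_functional_linf_unbounded:
  assumes "S \<noteq> {}" "\<phi> \<in> metric_functionals (linf S) (linf_dist S) (linf_zero S)"
  shows "\<not> bounded (\<phi> ` linf S)"
proof
  assume "bounded (\<phi> ` linf S)"
  then obtain B where B: "\<And>x. x \<in> linf S \<Longrightarrow> \<bar>\<phi> x\<bar> \<le> B"
    by (auto simp: bounded_iff)
  then have "B \<ge> 0"
    using const_in_linf by force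
  then have "B + 1 \<le> max (\<phi> (restrict (\<lambda>_. B + 1) S)) (\<phi> (restrict (\<lambda>_. -(B + 1)) S))"
    using assms by (intro metric_functional_linf_const_max_ge) auto
  moreover have "\<bar>\<phi> (restrict (\<lambda>_. B + 1) S)\<bar> \<le> B" "\<bar>\<phi> (restrict (\<lambda>_. -(B + 1)) S)\<bar> \<le> B"
    using B const_in_linf by blast+
  ultimately show False
    by linarith
qed

theorem proposition21:
  fixes S :: "'a set"
  assumes "S \<noteq> {}"
  shows "restrict (\<lambda>_. 0) (linf S) \<notin> metric_functionals (linf S) (linf_dist S) (linf_zero S)
     \<and> (\<forall>\<phi> \<in> metric_functionals (linf S) (linf_dist S) (linf_zero S). \<not> bounded (\<phi> ` linf S))"
proof -
  have "bounded (restrict (\<lambda>_. 0::real) (linf S) ` linf S)"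
    by (auto simp: bounded_iff)
  with metric_functional_linf_unbounded[OF assms] show ?thesis
    by blast
qed

end
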